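(* Let $n\geq1$ and $p<0$. There exists a positive constant $C_{n,p}$ depending only on $n$ and $p$ such that $u(x)\leq C_{n,p}$ for all $x\in\mathbb{S}^n$ and all $u\in\mathcal{B}$, where $$\mathcal{B}=\Big\{u\in H^*_+(\mathbb{S}^n):\ u \text{ is } (n+2)\text{-symmetric},\ \int_{\mathbb{S}^n}u^p\,d\sigma=|\mathbb{S}^n|\Big\}.$$
   Context: Fix $n+2$ points $q_1,\dots,q_{n+2}\in\mathbb{S}^n\subset\mathbb{R}^{n+1}$ spread evenly on $\mathbb{S}^n$, i.e. the vertices of a regular simplex inscribed in $\mathbb{S}^n$ ($\langle q_i,q_j\rangle=-\frac1{n+1}$ for $i\neq j$). Let $\mathcal{S}_{n+2}(q)$ be the set of rotations $\phi\in SO(n+1)$ mapping the set $\{q_1,\dots,q_{n+2}\}$ onto itself. A function $u$ on $\mathbb{S}^n$ (or on $\mathbb{R}^{n+1}$) is $(n+2)$-symmetric if $u\circ\phi=u$ for all $\phi\in\mathcal{S}_{n+2}(q)$. $H^*_+(\mathbb{S}^n)$ denotes the set of support functions $u$ of convex bodies $\Omega_u\subset\mathbb{R}^{n+1}$ with $u>0$ on $\mathbb{S}^n$ and finite volume $|\Omega_u|<\infty$. $d\sigma$ is the standard surface measure of $\mathbb{S}^n$ and $|\mathbb{S}^n|$ its total measure. *)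

theory Defs
  imports "HOL-Analysis.Analysis"
begin

text \<open>Ambient space R^(n+1) is the type real ^ ('n::finite) with CARD('n) = n+1;
  the unit sphere S^n is sphere 0 1.\<close>

text \<open>Integral over the unit sphere against the standard surface measure,
  via the cone-measure identity: the integral of f over S^n equals (n+1) times
  the Lebesgue integral over the unit ball of f(x/|x|).\<close>
definition sphere_integral :: "(real ^ ('n::finite) \<Rightarrow> real) \<Rightarrow> real" where
  "sphere_integral f =
     real CARD('n) * integral (cball (0::real ^ ('n::finite)) 1) (\<lambda>x. f (x /\<^sub>R norm x))"

definition sphere_area :: "('n::finite) itself \<Rightarrow> real" where
  "sphere_area _ = sphere_integral (\<lambda>x::real ^ ('n::finite). 1)"

definition support_fun :: "(real ^ ('n::finite)) set \<Rightarrow> real ^ ('n::finite) \<Rightarrow> real" where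
  "support_fun K x = Sup ((\<lambda>y. x \<bullet> y) ` K)"

definition Hstar_plus :: "(real ^ ('n::finite) \<Rightarrow> real) set" where
  "Hstar_plus = {u. \<exists>K. compact K \<and> convex K \<and> interior K \<noteq> {} \<and>
       emeasure lebesgue K < \<infinity> \<and> u = support_fun K \<and>
       (\<forall>x\<in>sphere 0 1. u x > 0)}"

definition regular_simplex :: "(nat \<Rightarrow> real ^ ('n::finite)) \<Rightarrow> bool" where
  "regular_simplex q \<longleftrightarrow>
     (\<forall>i < CARD('n) + 1. norm (q i) = 1) \<and>
     (\<forall>i < CARD('n) + 1. \<forall>j < CARD('n) + 1. i \<noteq> j \<longrightarrow>
         q i \<bullet> q j = - 1 / real CARD('n))"

definition sym_group :: "(nat \<Rightarrow> real ^ ('n::finite)) \<Rightarrow> (real ^ ('n::finite) \<Rightarrow> real ^ ('n::finite)) set" where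
  "sym_group q = {\<phi>. orthogonal_transformation \<phi> \<and> det (matrix \<phi>) = 1 \<and>
       \<phi> ` (q ` {..<CARD('n) + 1}) = q ` {..<CARD('n) + 1}}"

definition symmetric_wrt :: "(nat \<Rightarrow> real ^ ('n::finite)) \<Rightarrow> (real ^ ('n::finite) \<Rightarrow> real) \<Rightarrow> bool" where
  "symmetric_wrt q u \<longleftrightarrow> (\<forall>\<phi>\<in>sym_group q. u \<circ> \<phi> = u)"

definition classB :: "(nat \<Rightarrow> real ^ ('n::finite)) \<Rightarrow> real \<Rightarrow> (real ^ ('n::finite) \<Rightarrow> real) set" where
  "classB q p = {u \<in> Hstar_plus. symmetric_wrt q u \<and>
       sphere_integral (\<lambda>x. u x powr p) = sphere_area TYPE('n)}"

end

(*
  Let m = u (q 0); by symmetry u (q k) = m at every vertex. Points y of the body satisfy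
  y \<bullet> q k \<le> m for all k, and since the vertices form a tight frame summing to zero this gives
  u \<le> (n + 1) m on the sphere. Conversely, a point of the body where u (q 0) is attained can be
  moved by the symmetry group: for n \<ge> 2, averaging it over rotations fixing q 0 (products of two
  reflections swapping vertices) and iterating converges to m q 0, so the body contains the
  regular simplex m q k; for n = 1 its orbit under the rotation by a third of a turn is an
  equilateral triangle of circumradius at least m. Every unit vector makes inner product at least
  1 / (n + 1) with some vertex of a regular simplex, so u \<ge> m / (n + 1) on the sphere. As p < 0,
  the normalisation of the integral of u powr p then forces m / (n + 1) \<le> 1, whence
  u \<le> (n + 1)^2.
*)
theory Submission
  imports Defs
begin

section \<open>Reflections\<close>

definition reflection :: "'a::real_inner \<Rightarrow> 'a \<Rightarrow> 'a" where
  "reflection w x = x - (2 * (x \<bullet> w) / (w \<bullet> w)) *\<^sub>R w"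

lemma linear_reflection: "linear (reflection w)"
  unfolding reflection_def
  by (intro linearI) (auto simp: algebra_simps inner_add_left add_divide_distrib)

lemma inner_reflection_left: "reflection w x \<bullet> y = x \<bullet> reflection w y"
  unfolding reflection_def by (simp add: inner_diff_left inner_diff_right algebra_simps inner_commute)

lemma reflection_reflection: "w \<noteq> 0 \<Longrightarrow> reflection w (reflection w x) = x"
  unfolding reflection_def by (simp add: inner_diff_left algebra_simps)

lemma orthogonal_transformation_reflection: "orthogonal_transformation (reflection w)"
  unfolding orthogonal_transformation_def
proof (intro conjI allI linear_reflection)
  fix v x
  show "reflection w v \<bullet> reflection w x = v \<bullet> x"
  proof (cases "w = 0")
    case True
    then show ?thesis by (simp add: reflection_def)
  next
    case False
    then show ?thesis by (simp add: inner_reflection_left [symmetric] reflection_reflection)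
  qed
qed

text \<open>Reflections along vectors of equal length are conjugate by an orthogonal map.\<close>

lemma det_reflection_eq:
  fixes v w :: "real ^ 'n"
  assumes "norm v = norm w"
  shows "det (matrix (reflection w)) = det (matrix (reflection v))"
proof -
  obtain f where f: "orthogonal_transformation f" "f v = w"
    using orthogonal_transformation_exists [of v w] assms by blast
  have lf: "linear f"
    using f(1) by (rule orthogonal_transformation_linear)
  have ww: "w \<bullet> w = v \<bullet> v"
    using assms by (simp add: dot_square_norm)
  have "reflection w \<circ> f = f \<circ> reflection v"
  proof
    fix x
    have "f x \<bullet> w = x \<bullet> v"
      using f by (metis orthogonal_transformation_def)
    then show "(reflection w \<circ> f) x = (f \<circ> reflection v) x"
      unfolding reflection_def using lf f(2) ww by (simp add: linear_diff linear_scale)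
  qed
  then have "matrix (reflection w) ** matrix f = matrix f ** matrix (reflection v)"
    using matrix_compose [OF lf linear_reflection] matrix_compose [OF linear_reflection lf] by metis
  then have "det (matrix (reflection w)) * det (matrix f) = det (matrix f) * det (matrix (reflection v))"
    by (metis det_mul)
  moreover have "det (matrix f) \<noteq> 0"
    using orthogonal_transformation_det [OF f(1)] by auto
  ultimately show ?thesis
    by simp
qed

lemma det_reflection_comp:
  fixes v w :: "real ^ 'n"
  assumes "norm v = norm w"
  shows "det (matrix (reflection w \<circ> reflection v)) = 1"
proof -
  have "det (matrix (reflection w \<circ> reflection v)) = det (matrix (reflection v)) ^ 2"
    using det_reflection_eq [OF assms]
    by (simp add: matrix_compose [OF linear_reflection linear_reflection] det_mul power2_eq_square)
  also have "\<dots> = 1"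
    using orthogonal_transformation_det [OF orthogonal_transformation_reflection, of v]
    by (metis one_power2 power2_abs)
  finally show ?thesis .
qed

lemma sum_squares_le_of_sum_eq_0:
  fixes a :: "'i \<Rightarrow> real"
  assumes "(\<Sum>i\<in>I. a i) = 0" and "\<And>i. i \<in> I \<Longrightarrow> - B \<le> a i \<and> a i \<le> M"
  shows "(\<Sum>i\<in>I. (a i)\<^sup>2) \<le> real (card I) * M * B"
proof -
  have "(a i)\<^sup>2 \<le> M * B + (M - B) * a i" if "i \<in> I" for i
  proof -
    have "0 \<le> (M - a i) * (a i + B)"
      using assms(2) [OF that] by simp
    then show ?thesis
      by (simp add: algebra_simps power2_eq_square)
  qed
  then have "(\<Sum>i\<in>I. (a i)\<^sup>2) \<le> (\<Sum>i\<in>I. M * B + (M - B) * a i)"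
    by (rule sum_mono)
  also have "\<dots> = real (card I) * M * B"
    using assms(1) by (simp add: sum.distrib sum_distrib_left [symmetric])
  finally show ?thesis .
qed

lemma sum_sum_diff_scaleR_diff:
  fixes b :: "'i \<Rightarrow> real" and v :: "'i \<Rightarrow> 'a::real_vector"
  assumes "finite I"
  shows "(\<Sum>i\<in>I. \<Sum>j\<in>I. (b i - b j) *\<^sub>R (v i - v j)) =
    (2 * real (card I)) *\<^sub>R (\<Sum>i\<in>I. b i *\<^sub>R v i) - 2 *\<^sub>R ((\<Sum>i\<in>I. b i) *\<^sub>R (\<Sum>i\<in>I. v i))"
proof -
  have expand: "(b i - b j) *\<^sub>R (v i - v j) = (b i *\<^sub>R v i + b j *\<^sub>R v j) - (b i *\<^sub>R v j + b j *\<^sub>R v i)"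
    for i j by (simp add: scaleR_diff_left scaleR_diff_right algebra_simps)
  have "(\<Sum>i\<in>I. \<Sum>j\<in>I. b i *\<^sub>R v i + b j *\<^sub>R v j)
      = real (card I) *\<^sub>R (\<Sum>i\<in>I. b i *\<^sub>R v i) + real (card I) *\<^sub>R (\<Sum>j\<in>I. b j *\<^sub>R v j)"
    by (simp only: sum.distrib sum_constant_scaleR scaleR_sum_right)
  then have diagonal: "(\<Sum>i\<in>I. \<Sum>j\<in>I. b i *\<^sub>R v i + b j *\<^sub>R v j) = (2 * real (card I)) *\<^sub>R (\<Sum>i\<in>I. b i *\<^sub>R v i)"
    by (simp add: scaleR_add_left [symmetric])
  have "(\<Sum>i\<in>I. \<Sum>j\<in>I. b i *\<^sub>R v j) = (\<Sum>i\<in>I. b i) *\<^sub>R (\<Sum>i\<in>I. v i)"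
    by (simp add: scaleR_sum_left scaleR_sum_right) (rule sum.swap)
  moreover have "(\<Sum>i\<in>I. \<Sum>j\<in>I. b j *\<^sub>R v i) = (\<Sum>i\<in>I. b i) *\<^sub>R (\<Sum>i\<in>I. v i)"
    by (simp add: scaleR_sum_left scaleR_sum_right)
  ultimately have cross:
    "(\<Sum>i\<in>I. \<Sum>j\<in>I. b i *\<^sub>R v j + b j *\<^sub>R v i) = 2 *\<^sub>R ((\<Sum>i\<in>I. b i) *\<^sub>R (\<Sum>i\<in>I. v i))"
    by (simp only: sum.distrib scaleR_2)
  show ?thesis
    unfolding expand by (simp only: sum_subtractf diagonal cross)
qed

lemma inner_orbit_of_order_three:
  assumes R: "orthogonal_transformation R" and orbit: "y + R y + R (R y) = 0"
  shows "y \<bullet> R y = - (y \<bullet> y) / 2" and "y \<bullet> R (R y) = - (y \<bullet> y) / 2"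
    and "R y \<bullet> R (R y) = - (y \<bullet> y) / 2"
proof -
  have shift: "R y \<bullet> R (R y) = y \<bullet> R y" and norm: "R y \<bullet> R y = y \<bullet> y"
    using R by (simp_all add: orthogonal_transformation_def)
  have "0 = y \<bullet> (y + R y + R (R y))" and "0 = R y \<bullet> (y + R y + R (R y))"
    by (simp_all add: orbit)
  then have "y \<bullet> y + y \<bullet> R y + y \<bullet> R (R y) = 0" and "2 * (y \<bullet> R y) + y \<bullet> y = 0"
    using shift norm by (simp_all add: inner_add_right inner_commute)
  then show "y \<bullet> R y = - (y \<bullet> y) / 2" and "y \<bullet> R (R y) = - (y \<bullet> y) / 2"
    and "R y \<bullet> R (R y) = - (y \<bullet> y) / 2"
    using shift by linarith+
qed

lemma regular_simplex_orbit:
  fixes R :: "real ^ 'n \<Rightarrow> real ^ 'n"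
  assumes "CARD('n) = 2" "orthogonal_transformation R" "y + R y + R (R y) = 0" "y \<noteq> 0"
  shows "regular_simplex (\<lambda>k. (R ^^ k) y /\<^sub>R norm y)"
proof -
  have orbit: "(R ^^ 0) y = y" "(R ^^ 1) y = R y" "(R ^^ 2) y = R (R y)"
    by (simp_all add: numeral_2_eq_2)
  have indices: "i < CARD('n) + 1 \<longleftrightarrow> i = 0 \<or> i = 1 \<or> i = 2" for i :: nat
    using assms(1) by auto
  have norms: "norm (R y) = norm y" "norm (R (R y)) = norm y"
    using assms(2) by (simp_all add: orthogonal_transformation_norm)
  have "y \<bullet> y = (norm y)\<^sup>2" and "norm y \<noteq> 0"
    using assms(4) by (simp_all add: dot_square_norm)
  then show ?thesis
    unfolding regular_simplex_def indices using inner_orbit_of_order_three [OF assms(2,3)] assms(1)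
    by (auto simp: orbit norms inner_commute power2_eq_square field_simps)
qed

section \<open>Support functions\<close>

text \<open>For a compact convex \<open>K\<close>, \<open>dominated_by (support_fun K) z\<close> says \<open>z \<in> K\<close>; working with
  the predicate spares the argument the convexity and closedness of \<open>K\<close>.\<close>

definition dominated_by :: "('a::real_inner \<Rightarrow> real) \<Rightarrow> 'a \<Rightarrow> bool" where
  "dominated_by h z \<longleftrightarrow> (\<forall>x. x \<bullet> z \<le> h x)"

lemma dominated_by_support_fun:
  assumes "compact K" "y \<in> K"
  shows "dominated_by (support_fun K) y"
  unfolding dominated_by_def support_fun_def
proof
  fix x
  have "bounded ((\<lambda>y. x \<bullet> y) ` K)"
    by (intro compact_imp_bounded compact_continuous_image assms(1) continuous_intros)
  then show "x \<bullet> y \<le> Sup ((\<lambda>y. x \<bullet> y) ` K)"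
    using assms(2) by (intro cSup_upper bounded_imp_bdd_above) auto
qed

lemma support_fun_attained:
  assumes "compact K" "K \<noteq> {}"
  obtains y where "y \<in> K" "support_fun K x = x \<bullet> y"
proof -
  have "continuous_on K (\<lambda>y. x \<bullet> y)"
    by (intro continuous_intros)
  then obtain y where y: "y \<in> K" "\<forall>z\<in>K. x \<bullet> z \<le> x \<bullet> y"
    using continuous_attains_sup [OF assms] by blast
  then have "support_fun K x = x \<bullet> y"
    unfolding support_fun_def by (intro cSup_eq_maximum) auto
  with y(1) show ?thesis
    using that by blast
qed

lemma support_fun_zero: "K \<noteq> {} \<Longrightarrow> support_fun K 0 = 0"
  unfolding support_fun_def by simp

lemma dominated_by_average:
  assumes "finite A" "A \<noteq> {}" "\<And>a. a \<in> A \<Longrightarrow> dominated_by h (f a)"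
  shows "dominated_by h ((1 / real (card A)) *\<^sub>R (\<Sum>a\<in>A. f a))"
  unfolding dominated_by_def
proof
  fix x
  have "(\<Sum>a\<in>A. x \<bullet> f a) \<le> (\<Sum>a\<in>A. h x)"
    using assms(3) by (intro sum_mono) (auto simp: dominated_by_def)
  moreover have "0 < real (card A)"
    using assms(1,2) by (simp add: card_gt_0_iff)
  ultimately show "x \<bullet> (1 / real (card A)) *\<^sub>R (\<Sum>a\<in>A. f a) \<le> h x"
    by (simp add: inner_sum_right pos_divide_le_eq mult.commute)
qed

lemma dominated_by_limit:
  assumes "f \<longlonglongrightarrow> z" "\<And>k. dominated_by h (f k)"
  shows "dominated_by h z"
  unfolding dominated_by_def
proof
  fix x
  have "(\<lambda>k. x \<bullet> f k) \<longlonglongrightarrow> x \<bullet> z"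
    by (intro tendsto_intros assms(1))
  then show "x \<bullet> z \<le> h x"
    using assms(2) by (intro LIMSEQ_le_const2) (auto simp: dominated_by_def)
qed

lemma dominated_by_sym_group:
  assumes "symmetric_wrt q h" "\<phi> \<in> sym_group q" "dominated_by h z"
  shows "dominated_by h (\<phi> z)"
  unfolding dominated_by_def
proof
  fix x
  have \<phi>: "orthogonal_transformation \<phi>"
    using assms(2) by (simp add: sym_group_def)
  then obtain x' where "x = \<phi> x'"
    using orthogonal_transformation_surj by blast
  moreover have "\<phi> x' \<bullet> \<phi> z = x' \<bullet> z"
    using \<phi> by (simp add: orthogonal_transformation_def)
  moreover have "h (\<phi> x') = h x'"
    using assms(1,2) unfolding symmetric_wrt_def by (metis comp_apply)
  ultimately show "x \<bullet> \<phi> z \<le> h x"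
    using assms(3) by (simp add: dominated_by_def)
qed

lemma dominated_by_sym_group_funpow:
  assumes "symmetric_wrt q h" "\<phi> \<in> sym_group q" "dominated_by h z"
  shows "dominated_by h ((\<phi> ^^ k) z)"
  by (induction k) (simp_all add: assms(3) dominated_by_sym_group [OF assms(1,2)])

section \<open>Regular simplices\<close>

text \<open>Vertices are indexed by \<open>k \<le> CARD('n)\<close> rather than by \<open>k < CARD('n) + 1\<close> as in
  \<open>regular_simplex\<close>: the simplifier rewrites the latter to \<open>Suc\<close> form and splits sums over it.\<close>

locale regular_simplex_vertices =
  fixes q :: "nat \<Rightarrow> real ^ 'n"
  assumes regular: "regular_simplex q"
begin

lemma norm_vertex: "i \<le> CARD('n) \<Longrightarrow> norm (q i) = 1"
  using regular unfolding regular_simplex_def by simp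

lemma inner_vertex_self: "i \<le> CARD('n) \<Longrightarrow> q i \<bullet> q i = 1"
  using norm_vertex by (simp add: dot_square_norm)

lemma inner_vertex:
  "i \<le> CARD('n) \<Longrightarrow> j \<le> CARD('n) \<Longrightarrow> i \<noteq> j \<Longrightarrow> q i \<bullet> q j = - 1 / real CARD('n)"
  using regular unfolding regular_simplex_def by simp

lemma sum_vertex_inner_vertex: "i \<le> CARD('n) \<Longrightarrow> (\<Sum>j\<le>CARD('n). q i \<bullet> q j) = 0"
proof -
  assume i: "i \<le> CARD('n)"
  have "(\<Sum>j\<le>CARD('n). q i \<bullet> q j) = q i \<bullet> q i + (\<Sum>j\<in>{..CARD('n)} - {i}. q i \<bullet> q j)"
    using i by (subst sum.remove [of _ i]) auto
  also have "(\<Sum>j\<in>{..CARD('n)} - {i}. q i \<bullet> q j) = (\<Sum>j\<in>{..CARD('n)} - {i}. - 1 / real CARD('n))"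
    using i by (intro sum.cong) (auto simp: inner_vertex)
  finally show ?thesis
    using i by (simp add: inner_vertex_self)
qed

lemma sum_vertices: "(\<Sum>k\<le>CARD('n). q k) = 0"
proof -
  have "(\<Sum>k\<le>CARD('n). q k) \<bullet> (\<Sum>k\<le>CARD('n). q k) = (\<Sum>i\<le>CARD('n). \<Sum>j\<le>CARD('n). q i \<bullet> q j)"
    by (simp only: inner_sum_left inner_sum_right) (rule sum.swap)
  also have "\<dots> = 0"
    by (simp add: sum_vertex_inner_vertex)
  finally show ?thesis
    by simp
qed

lemma sum_inner_vertices: "(\<Sum>k\<le>CARD('n). z \<bullet> q k) = 0"
  using sum_vertices by (metis inner_sum_right inner_zero_right)

lemma inj_on_vertices: "inj_on q {..CARD('n)}"
proof (rule inj_onI, rule ccontr)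
  fix i j
  assume ij: "i \<in> {..CARD('n)}" "j \<in> {..CARD('n)}" "q i = q j" "i \<noteq> j"
  then have "1 = - 1 / real CARD('n)"
    using inner_vertex_self [of j] inner_vertex [of i j] by auto
  then show False
    by (simp add: field_simps)
qed

text \<open>Pairing a vanishing combination of the first \<open>CARD('n)\<close> vertices with each of them
  shows that all coefficients equal their mean, which then has to vanish.\<close>

lemma vanishing_combination_coefficient:
  assumes "(\<Sum>i<CARD('n). a i *\<^sub>R q i) = 0" "j < CARD('n)"
  shows "a j * (real CARD('n) + 1) = (\<Sum>i<CARD('n). a i)"
proof -
  have "0 = (\<Sum>i<CARD('n). a i *\<^sub>R q i) \<bullet> q j"
    using assms(1) by simp
  also have "\<dots> = (\<Sum>i<CARD('n). a i * (q i \<bullet> q j))"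
    by (simp add: inner_sum_left)
  also have "\<dots> = a j + (\<Sum>i\<in>{..<CARD('n)} - {j}. a i * (- 1 / real CARD('n)))"
    using assms(2) by (simp add: sum.remove [of _ j] inner_vertex_self inner_vertex)
  also have "(\<Sum>i\<in>{..<CARD('n)} - {j}. a i * (- 1 / real CARD('n)))
      = (\<Sum>i\<in>{..<CARD('n)} - {j}. a i) * (- 1 / real CARD('n))"
    by (simp only: sum_distrib_right)
  also have "(\<Sum>i\<in>{..<CARD('n)} - {j}. a i) = (\<Sum>i<CARD('n). a i) - a j"
    using assms(2) by (simp add: sum_diff1)
  finally show ?thesis
    by (simp add: field_simps)
qed

lemma independent_vertices: "independent (q ` {..<CARD('n)})"
proof
  assume "dependent (q ` {..<CARD('n)})"
  then obtain a where a: "\<exists>v\<in>q ` {..<CARD('n)}. a v \<noteq> 0"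
      "(\<Sum>v\<in>q ` {..<CARD('n)}. a v *\<^sub>R v) = 0"
    by (auto simp: dependent_finite)
  have "inj_on q {..<CARD('n)}"
    using inj_on_vertices by (rule inj_on_subset) auto
  with a(2) have "(\<Sum>i<CARD('n). a (q i) *\<^sub>R q i) = 0"
    by (simp add: sum.reindex)
  note coeff = vanishing_combination_coefficient [OF this]
  define A where "A = (\<Sum>i<CARD('n). a (q i))"
  have "A * (real CARD('n) + 1) = (\<Sum>j<CARD('n). a (q j) * (real CARD('n) + 1))"
    by (simp add: A_def sum_distrib_right)
  also have "\<dots> = real CARD('n) * A"
    using coeff by (simp add: A_def)
  finally have "A = 0"
    by (simp add: algebra_simps)
  moreover have "real CARD('n) + 1 \<noteq> 0"
    by (simp add: add_eq_0_iff)
  ultimately have "\<forall>j<CARD('n). a (q j) = 0"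
    using coeff by (simp add: A_def)
  with a(1) show False
    by auto
qed

lemma span_vertices: "span (q ` {..<CARD('n)}) = UNIV"
proof -
  have "card (q ` {..<CARD('n)}) = dim (UNIV :: (real ^ 'n) set)"
    by (subst card_image) (auto intro: inj_on_subset [OF inj_on_vertices])
  then show ?thesis
    using card_eq_dim [of "q ` {..<CARD('n)}" UNIV] independent_vertices
    by (auto simp: dim_UNIV)
qed

lemma orthogonal_vertices_eq_0:
  assumes "\<And>j. j \<le> CARD('n) \<Longrightarrow> w \<bullet> q j = 0"
  shows "w = 0"
proof -
  have "orthogonal w w"
    by (rule orthogonal_to_span [of w "q ` {..<CARD('n)}"])
      (use span_vertices assms in \<open>auto simp: orthogonal_def\<close>)
  then show ?thesis
    by (simp add: orthogonal_def)
qed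

lemma vertex_frame:
  "(\<Sum>k\<le>CARD('n). (z \<bullet> q k) *\<^sub>R q k) = ((real CARD('n) + 1) / real CARD('n)) *\<^sub>R z"
proof -
  have "(\<Sum>k\<le>CARD('n). (z \<bullet> q k) *\<^sub>R q k) \<bullet> q j = ((real CARD('n) + 1) / real CARD('n)) * (z \<bullet> q j)"
    if j: "j \<le> CARD('n)" for j
  proof -
    have "(\<Sum>k\<le>CARD('n). (z \<bullet> q k) *\<^sub>R q k) \<bullet> q j = (\<Sum>k\<le>CARD('n). (z \<bullet> q k) * (q k \<bullet> q j))"
      by (simp add: inner_sum_left)
    also have "\<dots> = z \<bullet> q j + (\<Sum>k\<in>{..CARD('n)} - {j}. z \<bullet> q k) * (- 1 / real CARD('n))"
      using j by (simp add: sum.remove [of _ j] inner_vertex_self inner_vertex sum_distrib_right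
          sum_divide_distrib sum_negf)
    also have "(\<Sum>k\<in>{..CARD('n)} - {j}. z \<bullet> q k) = - (z \<bullet> q j)"
      using j sum_inner_vertices [of z] by (simp add: sum_diff1)
    finally show ?thesis
      by (simp add: field_simps)
  qed
  then have "(\<Sum>k\<le>CARD('n). (z \<bullet> q k) *\<^sub>R q k) - ((real CARD('n) + 1) / real CARD('n)) *\<^sub>R z = 0"
    by (intro orthogonal_vertices_eq_0) (simp add: inner_diff_left)
  then show ?thesis
    by simp
qed

lemma inner_vertex_expansion:
  "x \<bullet> z = (real CARD('n) / (real CARD('n) + 1)) * (\<Sum>k\<le>CARD('n). (x \<bullet> q k) * (z \<bullet> q k))"
proof -
  have "(\<Sum>k\<le>CARD('n). (x \<bullet> q k) * (z \<bullet> q k)) = x \<bullet> (\<Sum>k\<le>CARD('n). (z \<bullet> q k) *\<^sub>R q k)"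
    by (simp add: inner_sum_right mult.commute)
  also have "\<dots> = ((real CARD('n) + 1) / real CARD('n)) * (x \<bullet> z)"
    by (simp add: vertex_frame)
  finally show ?thesis
    by (simp add: field_simps)
qed

lemma inner_vertex_diff:
  assumes "i \<le> CARD('n)" "j \<le> CARD('n)" "k \<le> CARD('n)" "i \<noteq> j"
  shows "q k \<bullet> (q i - q j) =
    (if k = i then 1 + 1 / real CARD('n) else if k = j then - (1 + 1 / real CARD('n)) else 0)"
  using assms by (auto simp: inner_diff_right inner_vertex_self inner_vertex)

lemma inner_vertex_diff_self:
  assumes "i \<le> CARD('n)" "j \<le> CARD('n)" "i \<noteq> j"
  shows "(q i - q j) \<bullet> (q i - q j) = 2 * (1 + 1 / real CARD('n))"
  using inner_vertex_diff [of i j i] inner_vertex_diff [of i j j] assms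
  by (simp add: inner_diff_left)

lemma reflection_vertex:
  assumes "i \<le> CARD('n)" "j \<le> CARD('n)" "k \<le> CARD('n)" "i \<noteq> j"
  shows "reflection (q i - q j) (q k) = q (Transposition.transpose i j k)"
proof -
  have "1 + 1 / real CARD('n) \<noteq> 0"
    by (simp add: add_pos_pos [THEN less_imp_neq, symmetric])
  then have "2 * (q k \<bullet> (q i - q j)) / ((q i - q j) \<bullet> (q i - q j)) =
      (if k = i then 1 else if k = j then - 1 else 0)"
    using inner_vertex_diff [OF assms] inner_vertex_diff_self [OF assms(1,2,4)]
    by (auto simp: field_simps)
  then show ?thesis
    using assms(4) by (auto simp: reflection_def transpose_def)
qed

lemma reflection_vertices:
  assumes "i \<le> CARD('n)" "j \<le> CARD('n)" "i \<noteq> j"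
  shows "reflection (q i - q j) ` q ` {..CARD('n)} = q ` {..CARD('n)}"
proof -
  have "reflection (q i - q j) ` q ` {..CARD('n)} = q ` Transposition.transpose i j ` {..CARD('n)}"
    using reflection_vertex [OF assms(1,2) _ assms(3)] by (force simp: image_image)
  also have "Transposition.transpose i j ` {..CARD('n)} = {..CARD('n)}"
    using assms by simp
  finally show ?thesis .
qed

lemma reflection_comp_mem_sym_group:
  assumes "i \<le> CARD('n)" "j \<le> CARD('n)" "i \<noteq> j" "k \<le> CARD('n)" "l \<le> CARD('n)" "k \<noteq> l"
  shows "reflection (q i - q j) \<circ> reflection (q k - q l) \<in> sym_group q"
  unfolding sym_group_def
proof (intro CollectI conjI)
  show "orthogonal_transformation (reflection (q i - q j) \<circ> reflection (q k - q l))"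
    by (intro orthogonal_transformation_compose orthogonal_transformation_reflection)
  have "norm (q k - q l) = norm (q i - q j)"
    using inner_vertex_diff_self [of i j] inner_vertex_diff_self [of k l] assms
    by (simp add: norm_eq)
  then show "det (matrix (reflection (q i - q j) \<circ> reflection (q k - q l))) = 1"
    by (rule det_reflection_comp)
  show "(reflection (q i - q j) \<circ> reflection (q k - q l)) ` q ` {..<CARD('n) + 1} = q ` {..<CARD('n) + 1}"
    using reflection_vertices [OF assms(1-3)] reflection_vertices [OF assms(4-6)]
    by (simp only: image_comp [symmetric] Suc_eq_plus1 [symmetric] lessThan_Suc_atMost)
qed

definition vertex_cycle :: "real ^ 'n \<Rightarrow> real ^ 'n" where
  "vertex_cycle = reflection (q 0 - q 1) \<circ> reflection (q 1 - q 2)"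

lemma vertex_cycle_mem_sym_group: "2 \<le> CARD('n) \<Longrightarrow> vertex_cycle \<in> sym_group q"
  unfolding vertex_cycle_def by (intro reflection_comp_mem_sym_group) auto

lemma vertex_cycle_vertices:
  assumes "2 \<le> CARD('n)"
  shows "vertex_cycle (q 0) = q 1" "vertex_cycle (q 1) = q 2" "vertex_cycle (q 2) = q 0"
  using assms by (simp_all add: vertex_cycle_def reflection_vertex transpose_def)

lemma vertex_cycle_orbit_sum:
  assumes "CARD('n) = 2"
  shows "y + vertex_cycle y + vertex_cycle (vertex_cycle y) = 0"
proof -
  let ?R = vertex_cycle
  have preserve: "?R v \<bullet> ?R w = v \<bullet> w" for v w
    using vertex_cycle_mem_sym_group assms by (simp add: sym_group_def orthogonal_transformation_def)
  have coordinates: "?R w \<bullet> q 1 = w \<bullet> q 0" "?R w \<bullet> q 2 = w \<bullet> q 1" "?R w \<bullet> q 0 = w \<bullet> q 2" for w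
    using preserve [of w "q 0"] preserve [of w "q 1"] preserve [of w "q 2"] vertex_cycle_vertices assms
    by simp_all
  have indices: "{..CARD('n)} = {0, 1, 2}"
    using assms by auto
  then have sum: "y \<bullet> q 0 + y \<bullet> q 1 + y \<bullet> q 2 = 0"
    using sum_inner_vertices [of y] by (simp add: add.assoc)
  have "(y + ?R y + ?R (?R y)) \<bullet> q 0 = y \<bullet> q 0 + y \<bullet> q 2 + y \<bullet> q 1"
    "(y + ?R y + ?R (?R y)) \<bullet> q 1 = y \<bullet> q 1 + y \<bullet> q 0 + y \<bullet> q 2"
    "(y + ?R y + ?R (?R y)) \<bullet> q 2 = y \<bullet> q 2 + y \<bullet> q 1 + y \<bullet> q 0"
    by (simp_all only: inner_add_left coordinates)
  then have "(y + ?R y + ?R (?R y)) \<bullet> q j = 0" if "j \<in> {0, 1, 2}" for j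
    using that sum by auto
  then show ?thesis
    using indices by (intro orthogonal_vertices_eq_0) auto
qed

lemma sym_group_transitive_on_vertices:
  assumes "2 \<le> CARD('n)" "k \<le> CARD('n)"
  obtains \<phi> where "\<phi> \<in> sym_group q" "\<phi> (q 0) = q k"
proof -
  define j where "j = (if k = 1 then 2 else 1 :: nat)"
  have j: "j \<le> CARD('n)" "j \<noteq> 0" "j \<noteq> k"
    using assms(1) by (auto simp: j_def)
  have "(reflection (q k - q j) \<circ> reflection (q 0 - q j)) (q 0) = q k"
    using j assms(2) by (simp add: reflection_vertex)
  moreover have "reflection (q k - q j) \<circ> reflection (q 0 - q j) \<in> sym_group q"
    using j assms(2) by (intro reflection_comp_mem_sym_group) auto
  ultimately show ?thesis
    using that by blast
qed

text \<open>The coordinates \<open>x \<bullet> q k\<close> of a unit vector have mean zero, mean square \<open>1 / CARD('n)\<close>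
  and modulus at most one, which forces the largest one to be at least \<open>1 / CARD('n)\<close>.\<close>

lemma exists_inner_vertex_ge:
  assumes "norm x = 1"
  obtains k where "k \<le> CARD('n)" "1 / real CARD('n) \<le> x \<bullet> q k"
proof -
  define M where "M = Max ((\<lambda>k. x \<bullet> q k) ` {..CARD('n)})"
  have "M \<in> (\<lambda>k. x \<bullet> q k) ` {..CARD('n)}"
    unfolding M_def by (intro Max_in) auto
  then obtain k where k: "k \<le> CARD('n)" "x \<bullet> q k = M"
    by auto
  have bounds: "- 1 \<le> x \<bullet> q i \<and> x \<bullet> q i \<le> M" if "i \<in> {..CARD('n)}" for i
    using that Cauchy_Schwarz_ineq2 [of x "q i"] assms norm_vertex [of i]
    by (auto simp: M_def abs_le_iff)
  have "(real CARD('n) + 1) / real CARD('n) = (\<Sum>i\<le>CARD('n). (x \<bullet> q i)\<^sup>2)"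
    using inner_vertex_expansion [of x x] assms by (simp add: dot_square_norm power2_eq_square field_simps)
  also have "\<dots> \<le> (real CARD('n) + 1) * M"
    using sum_squares_le_of_sum_eq_0 [OF sum_inner_vertices bounds] by (simp add: add.commute)
  finally have "(real CARD('n) + 1) * (1 / real CARD('n)) \<le> (real CARD('n) + 1) * M"
    by simp
  then have "1 / real CARD('n) \<le> M"
    by (rule mult_left_le_imp_le) simp
  with k show ?thesis
    using that by simp
qed

text \<open>Shifting every coordinate of \<open>x\<close> by one is free, as those of \<open>y\<close> sum to zero, and makes
  all weights nonnegative.\<close>

lemma inner_le_of_inner_vertices_le:
  assumes "norm x = 1" and "\<And>k. k \<le> CARD('n) \<Longrightarrow> y \<bullet> q k \<le> m"
  shows "x \<bullet> y \<le> real CARD('n) * m"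
proof -
  have "(\<Sum>k\<le>CARD('n). (x \<bullet> q k) * (y \<bullet> q k)) = (\<Sum>k\<le>CARD('n). (x \<bullet> q k + 1) * (y \<bullet> q k))"
    using sum_inner_vertices [of y] by (simp add: distrib_right sum.distrib)
  also have "\<dots> \<le> (\<Sum>k\<le>CARD('n). (x \<bullet> q k + 1) * m)"
  proof (rule sum_mono)
    fix k
    assume k: "k \<in> {..CARD('n)}"
    have "- 1 \<le> x \<bullet> q k"
      using Cauchy_Schwarz_ineq2 [of x "q k"] assms(1) norm_vertex [of k] k by (auto simp: abs_le_iff)
    with assms(2) [of k] k show "(x \<bullet> q k + 1) * (y \<bullet> q k) \<le> (x \<bullet> q k + 1) * m"
      by (intro mult_left_mono) auto
  qed
  also have "\<dots> = (real CARD('n) + 1) * m"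
    using sum_inner_vertices [of x] by (simp add: distrib_right sum.distrib sum_distrib_right [symmetric])
  finally have "(real CARD('n) / (real CARD('n) + 1)) * (\<Sum>k\<le>CARD('n). (x \<bullet> q k) * (y \<bullet> q k))
      \<le> (real CARD('n) / (real CARD('n) + 1)) * ((real CARD('n) + 1) * m)"
    by (rule mult_left_mono) simp
  then show ?thesis
    by (simp add: inner_vertex_expansion [of x y])
qed

lemma ge_of_dominated_vertices:
  assumes "0 \<le> r" "\<And>k. k \<le> CARD('n) \<Longrightarrow> dominated_by h (r *\<^sub>R q k)" "norm x = 1"
  shows "r / real CARD('n) \<le> h x"
proof -
  obtain k where k: "k \<le> CARD('n)" "1 / real CARD('n) \<le> x \<bullet> q k"
    using exists_inner_vertex_ge [OF assms(3)] .
  have "r / real CARD('n) \<le> r * (x \<bullet> q k)"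
    using mult_left_mono [OF k(2) assms(1)] by simp
  also have "\<dots> \<le> h x"
    using assms(2) [OF k(1)] by (simp add: dominated_by_def)
  finally show ?thesis .
qed

lemma sum_vertex_indices_split: "(\<Sum>k\<le>CARD('n). f k) = f 0 + (\<Sum>k\<in>{1..CARD('n)}. f k)"
proof -
  have "{..CARD('n)} = insert 0 {1..CARD('n)}"
    by auto
  then show ?thesis
    by simp
qed

lemma reflection_vertex_diff:
  assumes "i \<le> CARD('n)" "j \<le> CARD('n)" "i \<noteq> j"
  shows "reflection (q i - q j) z =
    z - (real CARD('n) / (real CARD('n) + 1) * (z \<bullet> q i - z \<bullet> q j)) *\<^sub>R (q i - q j)"
proof -
  have "2 * (z \<bullet> (q i - q j)) / (2 * (1 + 1 / real CARD('n))) =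
      real CARD('n) / (real CARD('n) + 1) * (z \<bullet> q i - z \<bullet> q j)"
    by (simp add: inner_diff_right field_simps)
  then show ?thesis
    unfolding reflection_def inner_vertex_diff_self [OF assms] by (simp only:)
qed

text \<open>Every summand fixes \<open>q 0\<close>, which is equidistant from \<open>q i\<close> and \<open>q j\<close>.\<close>

definition reflection_sum :: "real ^ 'n \<Rightarrow> real ^ 'n" where
  "reflection_sum z = (\<Sum>i\<in>{1..CARD('n)}. \<Sum>j\<in>{1..CARD('n)} - {i}. reflection (q i - q j) z)"

lemma sum_sum_vertex_diff:
  "(\<Sum>i\<in>{1..CARD('n)}. \<Sum>j\<in>{1..CARD('n)}. (z \<bullet> q i - z \<bullet> q j) *\<^sub>R (q i - q j))
    = (2 * (real CARD('n) + 1)) *\<^sub>R (z - (z \<bullet> q 0) *\<^sub>R q 0)"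
proof -
  define I where "I = {1..CARD('n)}"
  have frame: "(\<Sum>i\<in>I. (z \<bullet> q i) *\<^sub>R q i) = ((real CARD('n) + 1) / real CARD('n)) *\<^sub>R z - (z \<bullet> q 0) *\<^sub>R q 0"
    using vertex_frame [of z] sum_vertex_indices_split [of "\<lambda>k. (z \<bullet> q k) *\<^sub>R q k"]
    by (simp add: I_def algebra_simps)
  have coordinates: "(\<Sum>i\<in>I. z \<bullet> q i) = - (z \<bullet> q 0)"
    using sum_inner_vertices [of z] sum_vertex_indices_split [of "\<lambda>k. z \<bullet> q k"] by (simp add: I_def)
  have vertices: "(\<Sum>i\<in>I. q i) = - q 0"
    using sum_vertices sum_vertex_indices_split [of q] by (simp add: I_def eq_neg_iff_add_eq_0 add.commute)
  have "(\<Sum>i\<in>I. \<Sum>j\<in>I. (z \<bullet> q i - z \<bullet> q j) *\<^sub>R (q i - q j))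
      = (2 * real CARD('n)) *\<^sub>R (\<Sum>i\<in>I. (z \<bullet> q i) *\<^sub>R q i) - 2 *\<^sub>R ((\<Sum>i\<in>I. z \<bullet> q i) *\<^sub>R (\<Sum>i\<in>I. q i))"
    by (simp add: sum_sum_diff_scaleR_diff I_def)
  also have "\<dots> = (2 * real CARD('n) * ((real CARD('n) + 1) / real CARD('n))) *\<^sub>R z
      - (2 * real CARD('n) + 2) *\<^sub>R ((z \<bullet> q 0) *\<^sub>R q 0)"
    unfolding frame coordinates vertices by (simp add: algebra_simps)
  also have "2 * real CARD('n) * ((real CARD('n) + 1) / real CARD('n)) = 2 * (real CARD('n) + 1)"
    by simp
  finally show ?thesis
    by (simp add: I_def algebra_simps)
qed

lemma reflection_sum_eq:
  "reflection_sum z = (real CARD('n) * (real CARD('n) - 1)) *\<^sub>R z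
     - (2 * real CARD('n)) *\<^sub>R (z - (z \<bullet> q 0) *\<^sub>R q 0)"
proof -
  define I where "I = {1..CARD('n)}"
  define c where "c = real CARD('n) / (real CARD('n) + 1)"
  define D where "D i j = (z \<bullet> q i - z \<bullet> q j) *\<^sub>R (q i - q j)" for i j
  have "reflection_sum z = (\<Sum>i\<in>I. \<Sum>j\<in>I - {i}. z - c *\<^sub>R D i j)"
    unfolding reflection_sum_def I_def c_def D_def by (intro sum.cong refl) (simp add: reflection_vertex_diff)
  also have "\<dots> = (\<Sum>i\<in>I. \<Sum>j\<in>I - {i}. z) - c *\<^sub>R (\<Sum>i\<in>I. \<Sum>j\<in>I - {i}. D i j)"
    by (simp add: sum_subtractf scaleR_sum_right)
  also have "(\<Sum>i\<in>I. \<Sum>j\<in>I - {i}. D i j) = (\<Sum>i\<in>I. \<Sum>j\<in>I. D i j)"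
    by (rule sum.cong [OF refl]) (simp add: sum_diff1 D_def I_def)
  also have "(\<Sum>i\<in>I. \<Sum>j\<in>I - {i}. z) = (\<Sum>i\<in>I. (real CARD('n) - 1) *\<^sub>R z)"
    by (rule sum.cong [OF refl]) (simp add: I_def of_nat_diff sum_constant_scaleR del: sum_constant)
  also have "\<dots> = (real CARD('n) * (real CARD('n) - 1)) *\<^sub>R z"
    by (simp add: I_def sum_constant_scaleR del: sum_constant)
  also have "(\<Sum>i\<in>I. \<Sum>j\<in>I. D i j) = (2 * (real CARD('n) + 1)) *\<^sub>R (z - (z \<bullet> q 0) *\<^sub>R q 0)"
    unfolding I_def D_def by (rule sum_sum_vertex_diff)
  also have "c *\<^sub>R (2 * (real CARD('n) + 1)) *\<^sub>R (z - (z \<bullet> q 0) *\<^sub>R q 0) =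
      (2 * real CARD('n)) *\<^sub>R (z - (z \<bullet> q 0) *\<^sub>R q 0)"
  proof -
    have "real CARD('n) + 1 \<noteq> 0"
      by (simp add: add_eq_0_iff)
    then have "c * (2 * (real CARD('n) + 1)) = 2 * real CARD('n)"
      by (simp add: c_def field_simps)
    then show ?thesis
      by simp
  qed
  finally show ?thesis .
qed

definition reflection_average :: "real ^ 'n \<Rightarrow> real ^ 'n" where
  "reflection_average z =
    (1 / (real CARD('n) * (real CARD('n) - 1))\<^sup>2) *\<^sub>R reflection_sum (reflection_sum z)"

lemma reflection_average_eq:
  assumes "2 \<le> CARD('n)"
  shows "reflection_average z =
    (z \<bullet> q 0) *\<^sub>R q 0 + ((real CARD('n) - 3) / (real CARD('n) - 1))\<^sup>2 *\<^sub>R (z - (z \<bullet> q 0) *\<^sub>R q 0)"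
proof -
  define P where "P = real CARD('n) * (real CARD('n) - 1)"
  define r where "r = (real CARD('n) - 3) / (real CARD('n) - 1)"
  have "P \<noteq> 0"
    using assms by (simp add: P_def)
  have sum_eq: "reflection_sum w = P *\<^sub>R ((w \<bullet> q 0) *\<^sub>R q 0 + r *\<^sub>R (w - (w \<bullet> q 0) *\<^sub>R q 0))" for w
  proof -
    have "P * r = P - 2 * real CARD('n)"
      using assms by (simp add: P_def r_def field_simps)
    have "P *\<^sub>R ((w \<bullet> q 0) *\<^sub>R q 0 + r *\<^sub>R (w - (w \<bullet> q 0) *\<^sub>R q 0))
        = P *\<^sub>R ((w \<bullet> q 0) *\<^sub>R q 0) + (P * r) *\<^sub>R (w - (w \<bullet> q 0) *\<^sub>R q 0)"
      by (simp add: scaleR_add_right)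
    also have "\<dots> = P *\<^sub>R w - (2 * real CARD('n)) *\<^sub>R (w - (w \<bullet> q 0) *\<^sub>R q 0)"
      unfolding \<open>P * r = P - 2 * real CARD('n)\<close> by (simp add: algebra_simps)
    finally show ?thesis
      by (simp add: reflection_sum_eq P_def)
  qed
  have q0: "q 0 \<bullet> q 0 = 1"
    by (simp add: inner_vertex_self)
  have "reflection_sum z \<bullet> q 0 = P * (z \<bullet> q 0)"
    by (simp add: sum_eq inner_add_left inner_diff_left q0)
  then have "reflection_sum (reflection_sum z) = (P * P) *\<^sub>R ((z \<bullet> q 0) *\<^sub>R q 0 + r\<^sup>2 *\<^sub>R (z - (z \<bullet> q 0) *\<^sub>R q 0))"
    by (simp add: sum_eq [of "reflection_sum z"]) (simp add: sum_eq algebra_simps power2_eq_square)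
  with \<open>P \<noteq> 0\<close> show ?thesis
    by (simp add: reflection_average_def P_def [symmetric] r_def [symmetric] power2_eq_square)
qed

end

section \<open>Integrals over the sphere\<close>

text \<open>\<open>sphere_integral\<close> also samples \<open>f\<close> at \<open>0 /\<^sub>R norm 0 = 0\<close>, hence the hypothesis on \<open>f 0\<close>.\<close>

lemma sphere_integral_le_const:
  fixes f :: "real ^ 'n \<Rightarrow> real"
  assumes "0 \<le> c" and "\<And>x. x \<in> sphere 0 1 \<Longrightarrow> f x \<le> c" and "f 0 \<le> c"
  shows "sphere_integral f \<le> c * sphere_area TYPE('n)"
proof -
  define B where "B = cball (0 :: real ^ 'n) 1"
  define g where "g = (\<lambda>x :: real ^ 'n. f (x /\<^sub>R norm x))"
  have "emeasure lborel B < \<infinity>"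
    unfolding B_def by (rule emeasure_bounded_finite) simp
  then have ball: "((\<lambda>x. 1) has_integral measure lborel B) B"
    unfolding B_def by (intro has_integral_measure_lborel) auto
  then have area: "sphere_area TYPE('n) = real CARD('n) * measure lborel B"
    by (simp add: sphere_area_def sphere_integral_def B_def integral_unique)
  have g_le: "g x \<le> c" for x
    using assms(2) [of "x /\<^sub>R norm x"] assms(3) by (cases "x = 0") (simp_all add: g_def)
  then have integral_le: "integral B g \<le> c * measure lborel B"
  proof (cases "g integrable_on B")
    case True
    with has_integral_mult_right [OF ball, of c] show ?thesis
      by (intro has_integral_le [OF integrable_integral]) (auto simp: g_le)
  next
    case False
    then show ?thesis
      using assms(1) by (simp add: not_integrable_integral)
  qed
  have "sphere_integral f = real CARD('n) * integral B g"
    by (simp add: sphere_integral_def B_def g_def)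
  also have "\<dots> \<le> real CARD('n) * (c * measure lborel B)"
    using integral_le by (rule mult_left_mono) simp
  also have "\<dots> = c * sphere_area TYPE('n)"
    by (simp add: area)
  finally show ?thesis .
qed

lemma sphere_area_pos: "0 < sphere_area TYPE('n::finite)"
proof -
  have "emeasure lborel (cball (0 :: real ^ 'n) 1) < \<infinity>"
    by (rule emeasure_bounded_finite) simp
  then have "((\<lambda>x. 1) has_integral measure lborel (cball (0 :: real ^ 'n) 1)) (cball (0 :: real ^ 'n) 1)"
    by (intro has_integral_measure_lborel) auto
  then show ?thesis
    by (simp add: sphere_area_def sphere_integral_def integral_unique)
qed

lemma le_one_of_sphere_integral_powr:
  fixes u :: "real ^ 'n \<Rightarrow> real"
  assumes "p < 0" "0 < L" "\<And>x. x \<in> sphere 0 1 \<Longrightarrow> L \<le> u x" "u 0 = 0"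
    and "sphere_integral (\<lambda>x. u x powr p) = sphere_area TYPE('n)"
  shows "L \<le> 1"
proof (rule ccontr)
  assume "\<not> L \<le> 1"
  then have "L powr p < 1"
    using assms(1) by (intro powr_less_one) auto
  from mult_strict_right_mono [OF this sphere_area_pos [where 'n = 'n]]
  have less: "L powr p * sphere_area TYPE('n) < sphere_area TYPE('n)"
    by simp
  have "u x powr p \<le> L powr p" if "x \<in> sphere 0 1" for x
    using assms(1-3) that by (intro powr_mono2') auto
  then have "sphere_integral (\<lambda>x. u x powr p) \<le> L powr p * sphere_area TYPE('n)"
    using assms(4) by (intro sphere_integral_le_const) auto
  with less show False
    unfolding assms(5) by simp
qed

section \<open>Support functions invariant under the symmetries of a regular simplex\<close>

locale symmetric_support = regular_simplex_vertices q for q :: "nat \<Rightarrow> real ^ 'n" +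
  fixes K :: "(real ^ 'n) set"
  assumes compact: "compact K" and nonempty: "K \<noteq> {}"
    and symmetric: "symmetric_wrt q (support_fun K)" and dimension: "2 \<le> CARD('n)"
begin

abbreviation h :: "real ^ 'n \<Rightarrow> real" where
  "h \<equiv> support_fun K"

lemma support_vertex: "k \<le> CARD('n) \<Longrightarrow> h (q k) = h (q 0)"
  using symmetric sym_group_transitive_on_vertices [OF dimension]
  by (metis comp_apply symmetric_wrt_def)

lemma support_vertex_nonneg: "0 \<le> h (q 0)"
proof -
  obtain y where "y \<in> K"
    using nonempty by blast
  then have "(\<Sum>k\<le>CARD('n). y \<bullet> q k) \<le> (\<Sum>k\<le>CARD('n). h (q 0))"
    using dominated_by_support_fun [OF compact] support_vertex
    by (intro sum_mono) (metis atMost_iff dominated_by_def inner_commute)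
  then show ?thesis
    by (simp add: sum_inner_vertices zero_le_mult_iff)
qed

lemma support_le: "norm x = 1 \<Longrightarrow> h x \<le> real CARD('n) * h (q 0)"
proof -
  assume x: "norm x = 1"
  obtain y where y: "y \<in> K" "h x = x \<bullet> y"
    using support_fun_attained [OF compact nonempty] .
  have "y \<bullet> q k \<le> h (q 0)" if "k \<le> CARD('n)" for k
    using dominated_by_support_fun [OF compact y(1)] support_vertex [OF that]
    by (metis dominated_by_def inner_commute)
  with x y(2) show ?thesis
    by (simp add: inner_le_of_inner_vertices_le)
qed

lemma dominated_by_reflection_average:
  assumes "dominated_by h z"
  shows "dominated_by h (reflection_average z)"
proof -
  define P where "P = Sigma {1..CARD('n)} (\<lambda>i. {1..CARD('n)} - {i})"
  define \<rho> where "\<rho> p = reflection (q (fst p) - q (snd p))" for p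
  have "(1, 2) \<in> P"
    using dimension by (simp add: P_def)
  then have P_nonempty: "P \<noteq> {}"
    by blast
  have P_finite: "finite P"
    by (simp add: P_def)
  have P_card: "real (card P) = real CARD('n) * (real CARD('n) - 1)"
    using dimension by (simp add: P_def of_nat_diff)
  have sum_P: "reflection_sum w = (\<Sum>p\<in>P. \<rho> p w)" for w
    unfolding reflection_sum_def P_def \<rho>_def by (simp add: sum.Sigma split_def)
  have "reflection_sum (reflection_sum z) = (\<Sum>(a, b)\<in>P \<times> P. (\<rho> a \<circ> \<rho> b) z)"
    unfolding sum_P sum.cartesian_product [symmetric] \<rho>_def
    by (simp add: linear_sum [OF linear_reflection])
  then have "reflection_average z = (1 / real (card (P \<times> P))) *\<^sub>R (\<Sum>(a, b)\<in>P \<times> P. (\<rho> a \<circ> \<rho> b) z)"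
    by (simp add: reflection_average_def card_cartesian_product P_card power2_eq_square)
  also have "dominated_by h \<dots>"
  proof (rule dominated_by_average)
    fix ab
    assume "ab \<in> P \<times> P"
    then obtain a b where ab: "ab = (a, b)" "a \<in> P" "b \<in> P"
      by blast
    then have "\<rho> a \<circ> \<rho> b \<in> sym_group q"
      unfolding \<rho>_def P_def by (intro reflection_comp_mem_sym_group) auto
    from dominated_by_sym_group [OF symmetric this assms]
    show "dominated_by h ((\<lambda>(a, b). (\<rho> a \<circ> \<rho> b) z) ab)"
      unfolding ab(1) by simp
  qed (use P_finite P_nonempty in auto)
  finally show ?thesis .
qed

text \<open>Iterating the average contracts the component orthogonal to \<open>q 0\<close> of a point of \<open>K\<close>
  at which \<open>h (q 0)\<close> is attained; the stabiliser of \<open>q 0\<close> is trivial when \<open>CARD('n) = 2\<close>,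
  hence the hypothesis.\<close>

lemma dominated_by_support_vertex_scaled:
  assumes "3 \<le> CARD('n)"
  shows "dominated_by h (h (q 0) *\<^sub>R q 0)"
proof -
  define m where "m = h (q 0)"
  define c where "c = ((real CARD('n) - 3) / (real CARD('n) - 1))\<^sup>2"
  obtain y where y: "y \<in> K" "m = q 0 \<bullet> y"
    unfolding m_def using support_fun_attained [OF compact nonempty] .
  define e where "e = y - m *\<^sub>R q 0"
  have "e \<bullet> q 0 = y \<bullet> q 0 - m * (q 0 \<bullet> q 0)"
    by (simp add: e_def inner_diff_left)
  then have e: "e \<bullet> q 0 = 0"
    using y(2) by (simp add: inner_vertex_self inner_commute)
  have "dominated_by h (m *\<^sub>R q 0 + c ^ k *\<^sub>R e)" for k
  proof (induction k)
    case 0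
    then show ?case
      using dominated_by_support_fun [OF compact y(1)] by (simp add: e_def)
  next
    case (Suc k)
    have "reflection_average (m *\<^sub>R q 0 + c ^ k *\<^sub>R e) = m *\<^sub>R q 0 + c ^ Suc k *\<^sub>R e"
      using dimension e by (simp add: reflection_average_eq inner_add_left inner_vertex_self c_def)
    then show ?case
      using dominated_by_reflection_average [OF Suc.IH] by simp
  qed
  moreover have "(\<lambda>k. m *\<^sub>R q 0 + c ^ k *\<^sub>R e) \<longlonglongrightarrow> m *\<^sub>R q 0"
  proof -
    have "\<bar>(real CARD('n) - 3) / (real CARD('n) - 1)\<bar> < 1"
      using assms by (simp add: abs_less_iff field_simps)
    then have "norm c < 1"
      by (simp add: c_def abs_square_less_1)
    then show ?thesis
      using tendsto_add [OF tendsto_const tendsto_scaleR [OF LIMSEQ_power_zero tendsto_const]]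
      by (metis add_0_right scaleR_zero_left)
  qed
  ultimately show ?thesis
    unfolding m_def by (rule dominated_by_limit [rotated])
qed

text \<open>For \<open>CARD('n) = 2\<close>, \<open>vertex_cycle\<close> is the rotation through a third of a turn, and the
  orbit of a point \<open>y\<close> of \<open>K\<close> at which \<open>h (q 0)\<close> is attained is an equilateral triangle of
  circumradius \<open>norm y \<ge> h (q 0)\<close>.\<close>

lemma support_ge_dim2:
  assumes "CARD('n) = 2" "norm x = 1"
  shows "h (q 0) / 2 \<le> h x"
proof -
  have R: "vertex_cycle \<in> sym_group q"
    using assms(1) by (simp add: vertex_cycle_mem_sym_group)
  obtain y where y: "y \<in> K" "h (q 0) = q 0 \<bullet> y"
    using support_fun_attained [OF compact nonempty] .
  have dominated: "dominated_by h ((vertex_cycle ^^ k) y)" for k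
    using dominated_by_support_fun [OF compact y(1)] by (rule dominated_by_sym_group_funpow [OF symmetric R])
  show ?thesis
  proof (cases "y = 0")
    case True
    then show ?thesis
      using y(2) dominated [of 0] by (simp add: dominated_by_def)
  next
    case False
    have "orthogonal_transformation vertex_cycle"
      using R by (simp add: sym_group_def)
    with vertex_cycle_orbit_sum [OF assms(1)]
    interpret orbit: regular_simplex_vertices "\<lambda>k. (vertex_cycle ^^ k) y /\<^sub>R norm y"
      by unfold_locales (rule regular_simplex_orbit [OF assms(1) _ _ False])
    have "norm y / real CARD('n) \<le> h x"
      using dominated False by (intro orbit.ge_of_dominated_vertices [OF _ _ assms(2)]) auto
    moreover have "h (q 0) \<le> norm y"
      using y(2) Cauchy_Schwarz_ineq2 [of "q 0" y] norm_vertex [of 0] by simp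
    ultimately show ?thesis
      using assms(1) by simp
  qed
qed

lemma support_ge:
  assumes "norm x = 1"
  shows "h (q 0) / real CARD('n) \<le> h x"
proof (cases "CARD('n) = 2")
  case True
  then show ?thesis
    using support_ge_dim2 [OF True assms] by simp
next
  case False
  then have "3 \<le> CARD('n)"
    using dimension by simp
  have "dominated_by h (h (q 0) *\<^sub>R q k)" if k: "k \<le> CARD('n)" for k
  proof -
    obtain \<phi> where \<phi>: "\<phi> \<in> sym_group q" "\<phi> (q 0) = q k"
      using sym_group_transitive_on_vertices [OF dimension k] .
    then have "\<phi> (h (q 0) *\<^sub>R q 0) = h (q 0) *\<^sub>R q k"
      by (simp add: sym_group_def orthogonal_transformation_scaleR)
    with dominated_by_sym_group [OF symmetric \<phi>(1) dominated_by_support_vertex_scaled [OF \<open>3 \<le> CARD('n)\<close>]]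
    show ?thesis
      by simp
  qed
  then show ?thesis
    by (rule ge_of_dominated_vertices [OF support_vertex_nonneg _ assms])
qed

end

theorem lemma5p1:
  fixes p :: real
  assumes "CARD('n) \<ge> 2" and "p < 0"
  shows "\<exists>C > 0. \<forall>q :: nat \<Rightarrow> real ^ 'n. regular_simplex q \<longrightarrow>
           (\<forall>u \<in> classB q p. \<forall>x \<in> sphere 0 1. u x \<le> C)"
proof (intro exI [of _ "real CARD('n) ^ 2"] conjI allI impI ballI)
  fix q :: "nat \<Rightarrow> real ^ 'n" and u x
  assume q: "regular_simplex q" and u: "u \<in> classB q p" and x: "x \<in> sphere (0 :: real ^ 'n) 1"
  from u obtain K where K: "compact K" "interior K \<noteq> {}" "u = support_fun K"
    and positive: "\<forall>x\<in>sphere 0 1. u x > 0" and "symmetric_wrt q u"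
    and normalised: "sphere_integral (\<lambda>x. u x powr p) = sphere_area TYPE('n)"
    unfolding classB_def Hstar_plus_def by blast
  then interpret symmetric_support q K
    using assms(1) interior_subset by unfold_locales (auto simp: q)
  have "u (q 0) / real CARD('n) \<le> 1"
    using positive norm_vertex [of 0] support_ge support_fun_zero [OF nonempty]
    by (intro le_one_of_sphere_integral_powr [OF assms(2) _ _ _ normalised]) (auto simp: K(3))
  then have "u (q 0) \<le> real CARD('n)"
    by (simp add: field_simps)
  have "u x \<le> real CARD('n) * u (q 0)"
    using support_le x K(3) by simp
  also have "\<dots> \<le> real CARD('n) * real CARD('n)"
    using \<open>u (q 0) \<le> real CARD('n)\<close> by (rule mult_left_mono) simp
  finally show "u x \<le> real CARD('n) ^ 2"
    by (simp add: power2_eq_square)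
qed simp

end
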